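(* (1) Let $G=(V,E)$ be a graph with non-negative edge weights $w:E\to\mathbb{R}_{\ge0}$. The Steiner tree diversity of $G$ is the unique maximal diversity $\delta$ on $V$ (with respect to the pointwise order $\delta_1\preceq\delta_2$ iff $\delta_1(A)\le\delta_2(A)$ for all finite $A$) such that $\delta(\{u,v\})\le w(\{u,v\})$ for all $\{u,v\}\in E$. (2) Let $H=(V,E)$ be a hypergraph with non-negative weights $w:E\to\mathbb{R}_{\ge0}$. The hypergraph Steiner diversity of $H$ is the unique maximal diversity $\delta$ on $V$ (with respect to $\preceq$) such that $\delta(A)\le w(A)$ for all $A\in E$.
   Context: A diversity on a set $X$ is a function $\delta$ from finite subsets of $X$ to $\mathbb{R}$ with $\delta(A)\ge 0$, $\delta(A)=0$ whenever $|A|\le 1$ (values $0$ on larger sets are allowed), and $\delta(A\cup B)+\delta(B\cup C)\ge\delta(A\cup C)$ for all finite $A,B,C$ with $B\neq\emptyset$. The Steiner tree diversity of a weighted graph assigns to $A\subseteq V$ the minimum total weight of a connected subgraph of $G$ containing $A$. The hypergraph Steiner diversity assigns to $A\subseteq V$ the minimum of $\sum_{e\in E'}w(e)$ over all $E'\subseteq E$ such that the sub-hypergraph induced by $E'$ is connected and includes $A$. *)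

theory Defs
  imports Complex_Main
begin

definition is_diversity :: "'a set \<Rightarrow> ('a set \<Rightarrow> real) \<Rightarrow> bool" where
  "is_diversity X \<delta> \<longleftrightarrow>
     (\<forall>A. finite A \<and> A \<subseteq> X \<longrightarrow> \<delta> A \<ge> 0) \<and>
     (\<forall>A. finite A \<and> A \<subseteq> X \<and> card A \<le> 1 \<longrightarrow> \<delta> A = 0) \<and>
     (\<forall>A B C. finite A \<and> A \<subseteq> X \<and> finite B \<and> B \<subseteq> X \<and> finite C \<and> C \<subseteq> X
        \<and> B \<noteq> {} \<longrightarrow> \<delta> (A \<union> B) + \<delta> (B \<union> C) \<ge> \<delta> (A \<union> C))"

definition div_le :: "'a set \<Rightarrow> ('a set \<Rightarrow> real) \<Rightarrow> ('a set \<Rightarrow> real) \<Rightarrow> bool" where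
  "div_le X \<delta>1 \<delta>2 \<longleftrightarrow> (\<forall>A. finite A \<and> A \<subseteq> X \<longrightarrow> \<delta>1 A \<le> \<delta>2 A)"

definition adj :: "'a set set \<Rightarrow> ('a \<times> 'a) set" where
  "adj F = {(x, y). \<exists>e\<in>F. x \<in> e \<and> y \<in> e}"

definition connected_on :: "'a set \<Rightarrow> 'a set set \<Rightarrow> bool" where
  "connected_on W F \<longleftrightarrow> (\<forall>x\<in>W. \<forall>y\<in>W. (x, y) \<in> (adj F)\<^sup>*)"

definition is_graph :: "'a set \<Rightarrow> 'a set set \<Rightarrow> bool" where
  "is_graph V E \<longleftrightarrow> finite V \<and> (\<forall>e\<in>E. \<exists>u v. u \<in> V \<and> v \<in> V \<and> u \<noteq> v \<and> e = {u, v})"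

definition is_hypergraph :: "'a set \<Rightarrow> 'a set set \<Rightarrow> bool" where
  "is_hypergraph V E \<longleftrightarrow> finite V \<and> (\<forall>e\<in>E. e \<subseteq> V)"

definition steiner_tree_diversity ::
    "'a set \<Rightarrow> 'a set set \<Rightarrow> ('a set \<Rightarrow> real) \<Rightarrow> 'a set \<Rightarrow> real" where
  "steiner_tree_diversity V E w A =
     Min {sum w F | W F. A \<subseteq> W \<and> W \<subseteq> V \<and> F \<subseteq> E \<and> (\<forall>e\<in>F. e \<subseteq> W) \<and> connected_on W F}"

definition hypergraph_steiner_diversity ::
    "'a set \<Rightarrow> 'a set set \<Rightarrow> ('a set \<Rightarrow> real) \<Rightarrow> 'a set \<Rightarrow> real" where
  "hypergraph_steiner_diversity V E w A =
     (if card A \<le> 1 then 0 else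
      Min {sum w F | F. F \<subseteq> E \<and> connected_on (\<Union>F) F \<and> A \<subseteq> \<Union>F})"

end

theory Submission
  imports Defs
begin

text \<open>Both Steiner diversities are diversities, since gluing two connected witnesses along
  a common vertex gives a connected witness for the union. Conversely, a diversity \<open>\<delta>\<close>
  bounded by \<open>w\<close> on the edges satisfies \<open>\<delta>(e \<union> U) \<le> \<delta> e + \<delta> U\<close> whenever \<open>e\<close> meets \<open>U\<close>;
  adding the edges of a connected witness one at a time, each meeting the previous ones,
  bounds \<open>\<delta>\<close> of its vertex set, hence of any subset, by its total weight. So the Steiner
  diversity is the greatest element of the class, and in particular its unique maximal one.\<close>

lemma diversity_card_le_1:
  "is_diversity X \<delta> \<Longrightarrow> finite A \<Longrightarrow> A \<subseteq> X \<Longrightarrow> card A \<le> 1 \<Longrightarrow> \<delta> A = 0"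
  unfolding is_diversity_def by blast

lemma diversity_triangle:
  "is_diversity X \<delta> \<Longrightarrow> finite A \<Longrightarrow> A \<subseteq> X \<Longrightarrow> finite B \<Longrightarrow> B \<subseteq> X \<Longrightarrow>
   finite C \<Longrightarrow> C \<subseteq> X \<Longrightarrow> B \<noteq> {} \<Longrightarrow> \<delta> (A \<union> C) \<le> \<delta> (A \<union> B) + \<delta> (B \<union> C)"
  unfolding is_diversity_def by blast

lemma diversity_le_Un:
  assumes div: "is_diversity X \<delta>" and "finite A" "A \<subseteq> X" "finite D" "D \<subseteq> X"
  shows "\<delta> A \<le> \<delta> (A \<union> D)"
  using \<open>finite D\<close> \<open>D \<subseteq> X\<close>
proof (induction D rule: finite_induct)
  case empty
  then show ?case by simp
next
  case (insert b D)
  have "\<delta> ((A \<union> D) \<union> {}) \<le> \<delta> ((A \<union> D) \<union> {b}) + \<delta> ({b} \<union> {})"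
    by (rule diversity_triangle[OF div]) (use insert assms in auto)
  moreover have "\<delta> {b} = 0"
    by (rule diversity_card_le_1[OF div]) (use insert in auto)
  ultimately show ?case
    using insert by simp
qed

lemma diversity_mono:
  assumes "is_diversity X \<delta>" "finite B" "B \<subseteq> X" "A \<subseteq> B"
  shows "\<delta> A \<le> \<delta> B"
proof -
  have "\<delta> A \<le> \<delta> (A \<union> (B - A))"
    by (rule diversity_le_Un[OF assms(1)]) (use assms finite_subset in auto)
  then show ?thesis
    using assms by (simp add: Un_absorb1)
qed

lemma diversity_Un_le:
  assumes div: "is_diversity X \<delta>" and "finite A" "A \<subseteq> X" "finite C" "C \<subseteq> X" "A \<inter> C \<noteq> {}"
  shows "\<delta> (A \<union> C) \<le> \<delta> A + \<delta> C"
proof -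
  have "\<delta> (A \<union> C) \<le> \<delta> (A \<union> (A \<inter> C)) + \<delta> ((A \<inter> C) \<union> C)"
    by (rule diversity_triangle[OF div]) (use assms in auto)
  then show ?thesis
    by (simp add: Un_absorb2 Un_absorb1)
qed

lemma greatest_imp_unique_maximal:
  assumes "P D" "\<And>\<delta>. P \<delta> \<Longrightarrow> div_le X \<delta> D"
  shows "P D \<and> (\<forall>\<delta>. P \<delta> \<longrightarrow> div_le X \<delta> D)
    \<and> (\<forall>\<delta>. P \<delta> \<and> (\<forall>\<delta>'. P \<delta>' \<and> div_le X \<delta> \<delta>' \<longrightarrow> div_le X \<delta>' \<delta>)
           \<longrightarrow> div_le X \<delta> D \<and> div_le X D \<delta>)"
  using assms by blast

lemma subset_if_card_Un_le_1:
  assumes "finite (A \<union> B)" "card (A \<union> B) \<le> 1" "B \<noteq> {}"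
  shows "A \<subseteq> B"
proof
  fix a assume "a \<in> A"
  obtain b where "b \<in> B" using assms(3) by blast
  with \<open>a \<in> A\<close> have "a = b"
    using assms(2) card_le_Suc0_iff_eq[OF assms(1)] by auto
  with \<open>b \<in> B\<close> show "a \<in> B" by simp
qed

lemma sum_Un_le_nonneg:
  fixes f :: "'b \<Rightarrow> real"
  assumes "finite A" "finite B" "\<forall>x\<in>A \<inter> B. 0 \<le> f x"
  shows "sum f (A \<union> B) \<le> sum f A + sum f B"
  using sum_Un[OF assms(1,2), of f] sum_nonneg[of "A \<inter> B" f] assms(3) by simp

lemma connected_on_Un:
  assumes "connected_on W1 F1" "connected_on W2 F2" "W1 \<inter> W2 \<noteq> {}"
  shows "connected_on (W1 \<union> W2) (F1 \<union> F2)"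
proof -
  obtain b where b: "b \<in> W1" "b \<in> W2"
    using assms(3) by blast
  have "adj F1 \<subseteq> adj (F1 \<union> F2)" "adj F2 \<subseteq> adj (F1 \<union> F2)"
    unfolding adj_def by auto
  then have "(adj F1)\<^sup>* \<subseteq> (adj (F1 \<union> F2))\<^sup>*" "(adj F2)\<^sup>* \<subseteq> (adj (F1 \<union> F2))\<^sup>*"
    by (simp_all add: rtrancl_mono)
  then have "(x, b) \<in> (adj (F1 \<union> F2))\<^sup>* \<and> (b, x) \<in> (adj (F1 \<union> F2))\<^sup>*" if "x \<in> W1 \<union> W2" for x
    using assms(1,2) b that unfolding connected_on_def by blast
  then show ?thesis
    unfolding connected_on_def by (meson rtrancl_trans)
qed

lemma connected_on_empty_iff:
  "finite W \<Longrightarrow> connected_on W {} \<longleftrightarrow> card W \<le> 1"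
  by (simp add: connected_on_def adj_def card_le_Suc0_iff_eq)

lemma connected_on_single: "connected_on e {e}"
  unfolding connected_on_def adj_def by auto

lemma connected_on_mem_Union:
  assumes "connected_on W F" "x \<in> W" "y \<in> W" "x \<noteq> y"
  shows "x \<in> \<Union>F"
proof -
  have "(x, y) \<in> (adj F)\<^sup>*"
    using assms unfolding connected_on_def by blast
  then show ?thesis
    by (rule converse_rtranclE) (use assms in \<open>auto simp: adj_def\<close>)
qed

lemma connected_on_Union_eq:
  assumes "connected_on W F" "F \<noteq> {}" "\<forall>e\<in>F. e \<noteq> {} \<and> e \<subseteq> W"
  shows "\<Union>F = W"
proof
  show "\<Union>F \<subseteq> W"
    using assms(3) by blast
  obtain e y where "e \<in> F" "y \<in> e"
    using assms(2,3) by blast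
  then show "W \<subseteq> \<Union>F"
    using connected_on_mem_Union[OF assms(1), of _ y] assms(3) by blast
qed

lemma connected_on_edge_meets:
  assumes conn: "connected_on (\<Union>G) G" and "S \<subseteq> G" "S \<noteq> {}" "S \<noteq> G" "{} \<notin> G"
  shows "\<exists>e\<in>G - S. e \<inter> \<Union>S \<noteq> {}"
proof (rule ccontr)
  assume isolated: "\<not> ?thesis"
  obtain e x where e: "e \<in> G" "e \<notin> S" "x \<in> e"
    using assms by (metis all_not_in_conv subsetI subset_antisym)
  obtain s y where s: "s \<in> S" "y \<in> s"
    using assms by (metis all_not_in_conv subsetD)
  have "(y, x) \<in> (adj G)\<^sup>*"
    using conn \<open>S \<subseteq> G\<close> e s unfolding connected_on_def by blast
  then have "x \<in> \<Union>S"
  proof (induction rule: rtrancl_induct)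
    case base
    then show ?case using s by blast
  next
    case (step b c)
    then obtain f where "f \<in> G" "b \<in> f" "c \<in> f"
      unfolding adj_def by blast
    with step isolated show ?case by blast
  qed
  then show False
    using isolated e by blast
qed

lemma diversity_Union_le_sum_nonempty_edges:
  assumes div: "is_diversity X \<delta>" and fin: "finite G" "\<forall>e\<in>G. finite e"
    and sub: "\<Union>G \<subseteq> X" and "{} \<notin> G" and conn: "connected_on (\<Union>G) G"
  shows "\<delta> (\<Union>G) \<le> sum \<delta> G"
proof -
  have "\<exists>S\<subseteq>G. card S = n \<and> \<delta> (\<Union>S) \<le> sum \<delta> S" if "n \<le> card G" for n
    using that
  proof (induction n)
    case 0
    have "\<delta> {} = 0"
      by (rule diversity_card_le_1[OF div]) auto
    then show ?case
      by (intro exI[of _ "{}"]) auto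
  next
    case (Suc n)
    then obtain S where S: "S \<subseteq> G" "card S = n" "\<delta> (\<Union>S) \<le> sum \<delta> S"
      by auto
    have finS: "finite S"
      using S(1) fin(1) finite_subset by blast
    have "S \<noteq> G"
      using S(2) Suc.prems by auto
    show ?case
    proof (cases "S = {}")
      case True
      then obtain e where "e \<in> G"
        using \<open>S \<noteq> G\<close> by blast
      then show ?thesis
        using S(2) True by (intro exI[of _ "{e}"]) auto
    next
      case False
      then obtain e where e: "e \<in> G - S" "e \<inter> \<Union>S \<noteq> {}"
        using connected_on_edge_meets[OF conn S(1) _ \<open>S \<noteq> G\<close> \<open>{} \<notin> G\<close>] by blast
      have "\<delta> (\<Union>(insert e S)) \<le> \<delta> e + \<delta> (\<Union>S)"
        unfolding Union_insert
        by (rule diversity_Un_le[OF div]) (use e fin sub S(1) finS in \<open>auto simp: subset_iff\<close>)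
      also have "\<dots> \<le> sum \<delta> (insert e S)"
        using S(3) e(1) finS by simp
      finally show ?thesis
        using S e(1) finS by (intro exI[of _ "insert e S"]) auto
    qed
  qed
  then obtain S where "S \<subseteq> G" "card S = card G" "\<delta> (\<Union>S) \<le> sum \<delta> S"
    by blast
  then show ?thesis
    using fin(1) card_subset_eq by metis
qed

lemma diversity_Union_le_sum:
  assumes div: "is_diversity X \<delta>" and "finite G" "\<forall>e\<in>G. finite e"
    and "\<Union>G \<subseteq> X" and conn: "connected_on (\<Union>G) G"
  shows "\<delta> (\<Union>G) \<le> sum \<delta> G"
proof -
  let ?G = "G - {{}}"
  have "adj ?G = adj G"
    unfolding adj_def by blast
  then have "\<delta> (\<Union>?G) \<le> sum \<delta> ?G"
    using assms by (intro diversity_Union_le_sum_nonempty_edges[OF div])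
      (auto simp: connected_on_def)
  moreover have "sum \<delta> ?G = sum \<delta> G"
    using assms by (intro sum.mono_neutral_left) (auto intro: diversity_card_le_1[OF div])
  moreover have "\<Union>?G = \<Union>G"
    by blast
  ultimately show ?thesis
    by simp
qed

lemma diversity_le_weight_of_connected:
  assumes div: "is_diversity X \<delta>" and "finite F" "\<forall>e\<in>F. finite e" and "\<Union>F \<subseteq> X"
    and "connected_on (\<Union>F) F" and "\<forall>e\<in>F. \<delta> e \<le> w e" and "A \<subseteq> \<Union>F"
  shows "\<delta> A \<le> sum w F"
proof -
  have "\<delta> A \<le> \<delta> (\<Union>F)"
    using assms by (intro diversity_mono[OF div]) auto
  also have "\<dots> \<le> sum \<delta> F"
    using assms by (intro diversity_Union_le_sum[OF div])
  also have "\<dots> \<le> sum w F"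
    using assms by (intro sum_mono) auto
  finally show ?thesis .
qed

context
  fixes V :: "'a set" and E :: "'a set set" and w :: "'a set \<Rightarrow> real"
  assumes graph: "is_graph V E" and connected: "connected_on V E" and nonneg: "\<forall>e\<in>E. 0 \<le> w e"
begin

private lemma graph_finite_V: "finite V"
  using graph unfolding is_graph_def by blast

private lemma graph_edges_subset: "E \<subseteq> Pow V"
  using graph unfolding is_graph_def by fastforce

private lemma graph_finite_E: "finite E"
  using graph_edges_subset graph_finite_V by (simp add: finite_subset)

private lemma edge_doubleton: "e \<in> E \<Longrightarrow> \<exists>u v. e = {u, v}"
  using graph unfolding is_graph_def by blast

private lemma finite_steiner_tree_weights:
  "finite {sum w F | W F. A \<subseteq> W \<and> W \<subseteq> V \<and> F \<subseteq> E \<and> (\<forall>e\<in>F. e \<subseteq> W) \<and> connected_on W F}"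
  by (rule finite_subset[of _ "sum w ` Pow E"]) (auto simp: graph_finite_E)

lemma steiner_tree_diversity_le:
  assumes "A \<subseteq> W" "W \<subseteq> V" "F \<subseteq> E" "\<forall>e\<in>F. e \<subseteq> W" "connected_on W F"
  shows "steiner_tree_diversity V E w A \<le> sum w F"
  unfolding steiner_tree_diversity_def
  by (rule Min_le[OF finite_steiner_tree_weights]) (use assms in blast)

lemma steiner_tree_diversity_witness:
  assumes "A \<subseteq> V"
  obtains W F where "A \<subseteq> W" "W \<subseteq> V" "F \<subseteq> E" "\<forall>e\<in>F. e \<subseteq> W" "connected_on W F"
    "steiner_tree_diversity V E w A = sum w F"
proof -
  have "sum w E \<in> {sum w F | W F. A \<subseteq> W \<and> W \<subseteq> V \<and> F \<subseteq> E \<and> (\<forall>e\<in>F. e \<subseteq> W) \<and> connected_on W F}"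
    using assms connected graph_edges_subset by blast
  then have "steiner_tree_diversity V E w A
      \<in> {sum w F | W F. A \<subseteq> W \<and> W \<subseteq> V \<and> F \<subseteq> E \<and> (\<forall>e\<in>F. e \<subseteq> W) \<and> connected_on W F}"
    unfolding steiner_tree_diversity_def by (intro Min_in[OF finite_steiner_tree_weights]) blast
  then show ?thesis
    using that by blast
qed

lemma steiner_tree_diversity_nonneg:
  assumes "A \<subseteq> V"
  shows "0 \<le> steiner_tree_diversity V E w A"
proof -
  obtain W F where "F \<subseteq> E" "steiner_tree_diversity V E w A = sum w F"
    using steiner_tree_diversity_witness[OF assms] by metis
  then show ?thesis
    using nonneg by (auto intro: sum_nonneg)
qed

lemma is_diversity_steiner_tree_diversity: "is_diversity V (steiner_tree_diversity V E w)"
  unfolding is_diversity_def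
proof (intro conjI allI impI)
  fix A
  assume "finite A \<and> A \<subseteq> V"
  then show "0 \<le> steiner_tree_diversity V E w A"
    by (simp add: steiner_tree_diversity_nonneg)
next
  fix A
  assume A: "finite A \<and> A \<subseteq> V \<and> card A \<le> 1"
  then have "steiner_tree_diversity V E w A \<le> 0"
    using steiner_tree_diversity_le[of A A "{}"] connected_on_empty_iff[of A] by simp
  then show "steiner_tree_diversity V E w A = 0"
    using A steiner_tree_diversity_nonneg by (simp add: order_antisym)
next
  fix A B C
  assume H: "finite A \<and> A \<subseteq> V \<and> finite B \<and> B \<subseteq> V \<and> finite C \<and> C \<subseteq> V \<and> B \<noteq> {}"
  obtain W1 F1 where 1: "A \<union> B \<subseteq> W1" "W1 \<subseteq> V" "F1 \<subseteq> E" "\<forall>e\<in>F1. e \<subseteq> W1"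
      "connected_on W1 F1" "steiner_tree_diversity V E w (A \<union> B) = sum w F1"
    using steiner_tree_diversity_witness[of "A \<union> B"] H by auto
  obtain W2 F2 where 2: "B \<union> C \<subseteq> W2" "W2 \<subseteq> V" "F2 \<subseteq> E" "\<forall>e\<in>F2. e \<subseteq> W2"
      "connected_on W2 F2" "steiner_tree_diversity V E w (B \<union> C) = sum w F2"
    using steiner_tree_diversity_witness[of "B \<union> C"] H by auto
  have "connected_on (W1 \<union> W2) (F1 \<union> F2)"
    using connected_on_Un[OF 1(5) 2(5)] 1(1) 2(1) H by blast
  then have "steiner_tree_diversity V E w (A \<union> C) \<le> sum w (F1 \<union> F2)"
    by (rule steiner_tree_diversity_le[rotated 4]) (use 1 2 in auto)
  also have "\<dots> \<le> sum w F1 + sum w F2"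
    using 1(3) 2(3) graph_finite_E nonneg by (intro sum_Un_le_nonneg) (auto intro: finite_subset)
  finally show "steiner_tree_diversity V E w (A \<union> C)
      \<le> steiner_tree_diversity V E w (A \<union> B) + steiner_tree_diversity V E w (B \<union> C)"
    using 1(6) 2(6) by simp
qed

lemma steiner_tree_diversity_edge_le:
  assumes "{u, v} \<in> E"
  shows "steiner_tree_diversity V E w {u, v} \<le> w {u, v}"
  using steiner_tree_diversity_le[of "{u, v}" "{u, v}" "{{u, v}}"] assms graph_edges_subset
    connected_on_single by auto

lemma le_steiner_tree_diversity:
  assumes div: "is_diversity V \<delta>" and bound: "\<forall>u v. {u, v} \<in> E \<longrightarrow> \<delta> {u, v} \<le> w {u, v}"
  shows "div_le V \<delta> (steiner_tree_diversity V E w)"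
  unfolding div_le_def
proof (intro allI impI)
  fix A
  assume A: "finite A \<and> A \<subseteq> V"
  then obtain W F where W: "A \<subseteq> W" "W \<subseteq> V" "F \<subseteq> E" "\<forall>e\<in>F. e \<subseteq> W" "connected_on W F"
      and D: "steiner_tree_diversity V E w A = sum w F"
    using steiner_tree_diversity_witness by metis
  have "finite W"
    using W(2) graph_finite_V finite_subset by blast
  show "\<delta> A \<le> steiner_tree_diversity V E w A"
  proof (cases "F = {}")
    case True
    then have "card W \<le> 1"
      using connected_on_empty_iff[OF \<open>finite W\<close>] W(5) by simp
    then have "card A \<le> 1"
      using card_mono[OF \<open>finite W\<close> W(1)] by linarith
    then show ?thesis
      using A diversity_card_le_1[OF div] steiner_tree_diversity_nonneg by simp
  next
    case False
    have "\<Union>F = W"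
      using connected_on_Union_eq[OF W(5) False] W(3,4) edge_doubleton by blast
    moreover have "\<delta> e \<le> w e" if "e \<in> F" for e
      using that W(3) edge_doubleton bound by blast
    ultimately show ?thesis
      unfolding D using W \<open>finite W\<close> graph_finite_E
      by (intro diversity_le_weight_of_connected[OF div]) (auto intro: finite_subset)
  qed
qed

end

context
  fixes V :: "'a set" and E :: "'a set set" and w :: "'a set \<Rightarrow> real"
  assumes hypergraph: "is_hypergraph V E" and connected: "connected_on V E"
    and nonneg: "\<forall>e\<in>E. 0 \<le> w e"
begin

private lemma hypergraph_finite_V: "finite V"
  using hypergraph unfolding is_hypergraph_def by simp

private lemma hypergraph_edges_subset: "E \<subseteq> Pow V"
  using hypergraph unfolding is_hypergraph_def by auto

private lemma hypergraph_finite_E: "finite E"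
  using hypergraph_edges_subset hypergraph_finite_V by (simp add: finite_subset)

private lemma finite_hypergraph_steiner_weights:
  "finite {sum w F | F. F \<subseteq> E \<and> connected_on (\<Union>F) F \<and> A \<subseteq> \<Union>F}"
  by (rule finite_subset[of _ "sum w ` Pow E"]) (auto simp: hypergraph_finite_E)

lemma hypergraph_steiner_diversity_card_le_1:
  "card A \<le> 1 \<Longrightarrow> hypergraph_steiner_diversity V E w A = 0"
  unfolding hypergraph_steiner_diversity_def by simp

lemma hypergraph_steiner_diversity_eq_Min:
  "\<not> card A \<le> 1 \<Longrightarrow> hypergraph_steiner_diversity V E w A
     = Min {sum w F | F. F \<subseteq> E \<and> connected_on (\<Union>F) F \<and> A \<subseteq> \<Union>F}"
  unfolding hypergraph_steiner_diversity_def by simp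

lemma hypergraph_steiner_diversity_le:
  assumes "F \<subseteq> E" "connected_on (\<Union>F) F" "A \<subseteq> \<Union>F"
  shows "hypergraph_steiner_diversity V E w A \<le> sum w F"
proof (cases "card A \<le> 1")
  case True
  then show ?thesis
    using hypergraph_steiner_diversity_card_le_1 assms(1) nonneg by (auto intro: sum_nonneg)
next
  case False
  show ?thesis
    unfolding hypergraph_steiner_diversity_eq_Min[OF False]
    by (rule Min_le[OF finite_hypergraph_steiner_weights]) (use assms in blast)
qed

lemma hypergraph_steiner_diversity_witness:
  assumes "finite A" "A \<subseteq> V" "\<not> card A \<le> 1"
  obtains F where "F \<subseteq> E" "connected_on (\<Union>F) F" "A \<subseteq> \<Union>F"
    "hypergraph_steiner_diversity V E w A = sum w F"
proof -
  obtain x y where xy: "x \<in> A" "y \<in> A" "x \<noteq> y"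
    using assms card_le_Suc0_iff_eq[of A] by auto
  have "z \<in> \<Union>E" if "z \<in> V" for z
    using connected_on_mem_Union[OF connected that, of x] connected_on_mem_Union[OF connected that, of y]
      xy assms(2) by blast
  then have "\<Union>E = V"
    using hypergraph_edges_subset by blast
  then have "sum w E \<in> {sum w F | F. F \<subseteq> E \<and> connected_on (\<Union>F) F \<and> A \<subseteq> \<Union>F}"
    using assms(2) connected by auto
  then have "hypergraph_steiner_diversity V E w A
      \<in> {sum w F | F. F \<subseteq> E \<and> connected_on (\<Union>F) F \<and> A \<subseteq> \<Union>F}"
    unfolding hypergraph_steiner_diversity_eq_Min[OF assms(3)]
    by (intro Min_in[OF finite_hypergraph_steiner_weights]) blast
  then show ?thesis
    using that by blast
qed

lemma hypergraph_steiner_diversity_nonneg: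
  assumes "finite A" "A \<subseteq> V"
  shows "0 \<le> hypergraph_steiner_diversity V E w A"
proof (cases "card A \<le> 1")
  case True
  then show ?thesis
    by (simp add: hypergraph_steiner_diversity_card_le_1)
next
  case False
  then obtain F where "F \<subseteq> E" "hypergraph_steiner_diversity V E w A = sum w F"
    using hypergraph_steiner_diversity_witness[OF assms] by metis
  then show ?thesis
    using nonneg by (auto intro: sum_nonneg)
qed

lemma hypergraph_steiner_diversity_mono:
  assumes "finite B" "B \<subseteq> V" "A \<subseteq> B"
  shows "hypergraph_steiner_diversity V E w A \<le> hypergraph_steiner_diversity V E w B"
proof (cases "card B \<le> 1")
  case True
  then have "card A \<le> 1"
    using card_mono[OF assms(1,3)] by linarith
  then show ?thesis
    using True by (simp add: hypergraph_steiner_diversity_card_le_1)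
next
  case False
  then obtain F where "F \<subseteq> E" "connected_on (\<Union>F) F" "B \<subseteq> \<Union>F"
      "hypergraph_steiner_diversity V E w B = sum w F"
    using hypergraph_steiner_diversity_witness[OF assms(1,2)] by metis
  then show ?thesis
    using hypergraph_steiner_diversity_le assms(3) by (metis subset_trans)
qed

lemma hypergraph_steiner_diversity_triangle:
  assumes "finite A" "A \<subseteq> V" "finite B" "B \<subseteq> V" "finite C" "C \<subseteq> V" "B \<noteq> {}"
  shows "hypergraph_steiner_diversity V E w (A \<union> C)
    \<le> hypergraph_steiner_diversity V E w (A \<union> B) + hypergraph_steiner_diversity V E w (B \<union> C)"
    (is "?D (A \<union> C) \<le> ?D (A \<union> B) + ?D (B \<union> C)")
proof -
  have nonneg_AB: "0 \<le> ?D (A \<union> B)" and nonneg_BC: "0 \<le> ?D (B \<union> C)"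
    using assms by (simp_all add: hypergraph_steiner_diversity_nonneg)
  consider "card (A \<union> B) \<le> 1" | "card (B \<union> C) \<le> 1"
    | "\<not> card (A \<union> B) \<le> 1" "\<not> card (B \<union> C) \<le> 1"
    by blast
  then show ?thesis
  proof cases
    case 1
    then have "A \<subseteq> B"
      using assms(1,3,7) by (intro subset_if_card_Un_le_1) auto
    then have "?D (A \<union> C) \<le> ?D (B \<union> C)"
      using assms(3-6) by (intro hypergraph_steiner_diversity_mono) auto
    then show ?thesis
      using nonneg_AB by linarith
  next
    case 2
    then have "C \<subseteq> B"
      using assms(3,5,7) by (intro subset_if_card_Un_le_1) (auto simp: Un_commute)
    then have "?D (A \<union> C) \<le> ?D (A \<union> B)"
      using assms(1-4) by (intro hypergraph_steiner_diversity_mono) auto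
    then show ?thesis
      using nonneg_BC by linarith
  next
    case 3
    obtain F1 where 1: "F1 \<subseteq> E" "connected_on (\<Union>F1) F1" "A \<union> B \<subseteq> \<Union>F1" "?D (A \<union> B) = sum w F1"
      using hypergraph_steiner_diversity_witness[of "A \<union> B"] assms 3(1) by (metis Un_subset_iff finite_Un)
    obtain F2 where 2: "F2 \<subseteq> E" "connected_on (\<Union>F2) F2" "B \<union> C \<subseteq> \<Union>F2" "?D (B \<union> C) = sum w F2"
      using hypergraph_steiner_diversity_witness[of "B \<union> C"] assms 3(2) by (metis Un_subset_iff finite_Un)
    have "connected_on (\<Union>F1 \<union> \<Union>F2) (F1 \<union> F2)"
      using connected_on_Un[OF 1(2) 2(2)] 1(3) 2(3) assms(7) by blast
    then have "?D (A \<union> C) \<le> sum w (F1 \<union> F2)"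
      using 1 2 by (intro hypergraph_steiner_diversity_le) auto
    also have "\<dots> \<le> sum w F1 + sum w F2"
      using 1(1) 2(1) hypergraph_finite_E nonneg by (intro sum_Un_le_nonneg) (auto intro: finite_subset)
    finally show ?thesis
      using 1(4) 2(4) by simp
  qed
qed

lemma is_diversity_hypergraph_steiner_diversity:
  "is_diversity V (hypergraph_steiner_diversity V E w)"
  unfolding is_diversity_def
  by (simp add: hypergraph_steiner_diversity_nonneg hypergraph_steiner_diversity_card_le_1
      hypergraph_steiner_diversity_triangle)

lemma hypergraph_steiner_diversity_edge_le:
  "A \<in> E \<Longrightarrow> hypergraph_steiner_diversity V E w A \<le> w A"
  using hypergraph_steiner_diversity_le[of "{A}" A] connected_on_single[of A] by simp

lemma le_hypergraph_steiner_diversity: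
  assumes div: "is_diversity V \<delta>" and bound: "\<forall>A\<in>E. \<delta> A \<le> w A"
  shows "div_le V \<delta> (hypergraph_steiner_diversity V E w)"
  unfolding div_le_def
proof (intro allI impI)
  fix A
  assume A: "finite A \<and> A \<subseteq> V"
  show "\<delta> A \<le> hypergraph_steiner_diversity V E w A"
  proof (cases "card A \<le> 1")
    case True
    then show ?thesis
      using A diversity_card_le_1[OF div] hypergraph_steiner_diversity_nonneg by simp
  next
    case False
    then obtain F where F: "F \<subseteq> E" "connected_on (\<Union>F) F" "A \<subseteq> \<Union>F"
        and D: "hypergraph_steiner_diversity V E w A = sum w F"
      using hypergraph_steiner_diversity_witness A by metis
    have "\<forall>e\<in>F. finite e"
      using F(1) hypergraph_edges_subset hypergraph_finite_V by (auto intro: finite_subset)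
    then show ?thesis
      unfolding D using F hypergraph_edges_subset hypergraph_finite_E bound
      by (intro diversity_le_weight_of_connected[OF div]) (auto intro: finite_subset)
  qed
qed

end

theorem theorem3:
  shows
   "(\<forall>(V :: 'a set) E (w :: 'a set \<Rightarrow> real).
       is_graph V E \<and> connected_on V E \<and> (\<forall>e\<in>E. w e \<ge> 0) \<longrightarrow>
       (let P = (\<lambda>\<delta>. is_diversity V \<delta> \<and> (\<forall>u v. {u, v} \<in> E \<longrightarrow> \<delta> {u, v} \<le> w {u, v}));
            D = steiner_tree_diversity V E w
        in P D \<and> (\<forall>\<delta>. P \<delta> \<longrightarrow> div_le V \<delta> D)
           \<and> (\<forall>\<delta>. P \<delta> \<and> (\<forall>\<delta>'. P \<delta>' \<and> div_le V \<delta> \<delta>' \<longrightarrow> div_le V \<delta>' \<delta>)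
                  \<longrightarrow> div_le V \<delta> D \<and> div_le V D \<delta>)))
  \<and> (\<forall>(V :: 'a set) E (w :: 'a set \<Rightarrow> real).
       is_hypergraph V E \<and> connected_on V E \<and> (\<forall>e\<in>E. w e \<ge> 0) \<longrightarrow>
       (let P = (\<lambda>\<delta>. is_diversity V \<delta> \<and> (\<forall>A\<in>E. \<delta> A \<le> w A));
            D = hypergraph_steiner_diversity V E w
        in P D \<and> (\<forall>\<delta>. P \<delta> \<longrightarrow> div_le V \<delta> D)
           \<and> (\<forall>\<delta>. P \<delta> \<and> (\<forall>\<delta>'. P \<delta>' \<and> div_le V \<delta> \<delta>' \<longrightarrow> div_le V \<delta>' \<delta>)
                  \<longrightarrow> div_le V \<delta> D \<and> div_le V D \<delta>)))"
  apply (intro conjI allI impI)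
  subgoal premises hyps for V E w
  proof -
    have "is_graph V E" "connected_on V E" "\<forall>e\<in>E. 0 \<le> w e"
      using hyps by auto
    note facts = is_diversity_steiner_tree_diversity[OF this]
      steiner_tree_diversity_edge_le[OF this] le_steiner_tree_diversity[OF this]
    show ?thesis
      unfolding Let_def by (rule greatest_imp_unique_maximal) (use facts in blast)+
  qed
  subgoal premises hyps for V E w
  proof -
    have "is_hypergraph V E" "connected_on V E" "\<forall>e\<in>E. 0 \<le> w e"
      using hyps by auto
    note facts = is_diversity_hypergraph_steiner_diversity[OF this]
      hypergraph_steiner_diversity_edge_le[OF this] le_hypergraph_steiner_diversity[OF this]
    show ?thesis
      unfolding Let_def by (rule greatest_imp_unique_maximal) (use facts in blast)+
  qed
  done

end
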